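(* A net $A:\mathcal{V}(X)\to\mathbf{CStar}_{inc}$ is local if and only if for every pair $(O_1,O_2)$ of spacelike separated elements of $\mathcal{V}(X)$ the monotone map $$r: C(A(O_1\vee O_2))\to C(A(O_1))\times C(A(O_2)),\qquad C\mapsto (C\cap A(O_1),\,C\cap A(O_2))$$ has a left adjoint.
   Context: $X$ is a Lorentzian manifold. Two subsets are spacelike separated if no timelike or lightlike curve joins any of their points. For an open $O$, $O'$ is the interior of the set of points spacelike separated from $O$; $\mathcal{V}(X)$ is the poset of connected opens with $O''=O$ under inclusion, and $O_1\vee O_2$ their join in $\mathcal{V}(X)$. All C*-algebras are unital; $\mathbf{CStar}_{inc}$ has injective *-homomorphisms as arrows. A net is a functor $A:\mathcal{V}(X)\to\mathbf{CStar}_{inc}$, all $A(O)$ viewed as subalgebras of $A(X)$; it is local if for spacelike separated $O_1,O_2$, $A(O_1)$ and $A(O_2)$ commute elementwise in $A(O_1\vee O_2)$. $C(B)$ is the poset of commutative C*-subalgebras of $B$. *)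

theory Defs
  imports "HOL-Analysis.Analysis"
begin

class cstar_algebra = banach + real_normed_algebra_1 +
  fixes scaleC :: "complex \<Rightarrow> 'a \<Rightarrow> 'a"
    and cstar :: "'a \<Rightarrow> 'a"
  assumes scaleC_scaleR: "scaleC (complex_of_real r) x = scaleR r x"
    and scaleC_add_right: "scaleC a (x + y) = scaleC a x + scaleC a y"
    and scaleC_add_left: "scaleC (a + b) x = scaleC a x + scaleC b x"
    and scaleC_scaleC: "scaleC a (scaleC b x) = scaleC (a * b) x"
    and scaleC_one: "scaleC 1 x = x"
    and norm_scaleC: "norm (scaleC a x) = cmod a * norm x"
    and mult_scaleC_left: "scaleC a x * y = scaleC a (x * y)"
    and mult_scaleC_right: "x * scaleC a y = scaleC a (x * y)"
    and cstar_cstar: "cstar (cstar x) = x"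
    and cstar_add: "cstar (x + y) = cstar x + cstar y"
    and cstar_mult: "cstar (x * y) = cstar y * cstar x"
    and cstar_scaleC: "cstar (scaleC a x) = scaleC (cnj a) (cstar x)"
    and cstar_identity: "norm (cstar x * x) = norm x ^ 2"

definition cstar_subalg :: "'a::cstar_algebra set \<Rightarrow> bool" where
  "cstar_subalg S \<longleftrightarrow> 1 \<in> S \<and>
     (\<forall>x\<in>S. \<forall>y\<in>S. x + y \<in> S \<and> x * y \<in> S) \<and>
     (\<forall>a. \<forall>x\<in>S. scaleC a x \<in> S) \<and>
     (\<forall>x\<in>S. cstar x \<in> S) \<and> closed S"

definition comm_subalgs :: "'a::cstar_algebra set \<Rightarrow> 'a set set" where
  "comm_subalgs B = {C. cstar_subalg C \<and> C \<subseteq> B \<and> (\<forall>x\<in>C. \<forall>y\<in>C. x * y = y * x)}"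

text \<open>\<open>causal x y\<close>: some timelike or lightlike curve joins x and y.\<close>
definition spacelike_sep :: "('p \<Rightarrow> 'p \<Rightarrow> bool) \<Rightarrow> 'p set \<Rightarrow> 'p set \<Rightarrow> bool" where
  "spacelike_sep causal S T \<longleftrightarrow> (\<forall>x\<in>S. \<forall>y\<in>T. \<not> causal x y \<and> \<not> causal y x)"

definition causal_compl :: "('p::topological_space \<Rightarrow> 'p \<Rightarrow> bool) \<Rightarrow> 'p set \<Rightarrow> 'p set" where
  "causal_compl causal U = interior {x. spacelike_sep causal {x} U}"

definition V_opens :: "('p::topological_space \<Rightarrow> 'p \<Rightarrow> bool) \<Rightarrow> 'p set set" where
  "V_opens causal = {U. open U \<and> connected U \<and>
      causal_compl causal (causal_compl causal U) = U}"

definition is_join :: "'p set set \<Rightarrow> 'p set \<Rightarrow> 'p set \<Rightarrow> 'p set \<Rightarrow> bool" where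
  "is_join V U1 U2 J \<longleftrightarrow> J \<in> V \<and> U1 \<subseteq> J \<and> U2 \<subseteq> J \<and>
      (\<forall>K\<in>V. U1 \<subseteq> K \<and> U2 \<subseteq> K \<longrightarrow> J \<subseteq> K)"

text \<open>A net V(X) \<rightarrow> CStar_inc, all algebras viewed as unital C*-subalgebras of the
  ambient algebra, arrows being inclusions.\<close>
definition is_net :: "('p::topological_space \<Rightarrow> 'p \<Rightarrow> bool) \<Rightarrow> ('p set \<Rightarrow> 'a::cstar_algebra set) \<Rightarrow> bool" where
  "is_net causal A \<longleftrightarrow> (\<forall>U\<in>V_opens causal. cstar_subalg (A U)) \<and>
     (\<forall>U1\<in>V_opens causal. \<forall>U2\<in>V_opens causal. U1 \<subseteq> U2 \<longrightarrow> A U1 \<subseteq> A U2)"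

definition is_local_net :: "('p::topological_space \<Rightarrow> 'p \<Rightarrow> bool) \<Rightarrow> ('p set \<Rightarrow> 'a::cstar_algebra set) \<Rightarrow> bool" where
  "is_local_net causal A \<longleftrightarrow>
     (\<forall>U1\<in>V_opens causal. \<forall>U2\<in>V_opens causal. \<forall>J.
        spacelike_sep causal U1 U2 \<and> is_join (V_opens causal) U1 U2 J \<longrightarrow>
        (\<forall>a\<in>A U1. \<forall>b\<in>A U2. a * b = b * a))"

definition has_left_adjoint ::
  "'x set \<Rightarrow> ('x \<Rightarrow> 'x \<Rightarrow> bool) \<Rightarrow> 'y set \<Rightarrow> ('y \<Rightarrow> 'y \<Rightarrow> bool) \<Rightarrow> ('y \<Rightarrow> 'x) \<Rightarrow> bool" where
  "has_left_adjoint P leP Q leQ r \<longleftrightarrow> (\<exists>l.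
      (\<forall>x\<in>P. l x \<in> Q) \<and>
      (\<forall>x\<in>P. \<forall>x'\<in>P. leP x x' \<longrightarrow> leQ (l x) (l x')) \<and>
      (\<forall>x\<in>P. \<forall>y\<in>Q. leQ (l x) y \<longleftrightarrow> leP x (r y)))"

definition prod_le :: "'a set \<times> 'b set \<Rightarrow> 'a set \<times> 'b set \<Rightarrow> bool" where
  "prod_le p q \<longleftrightarrow> fst p \<subseteq> fst q \<and> snd p \<subseteq> snd q"

end

theory Submission
  imports Defs
begin

text \<open>If the algebras of spacelike separated regions commute, the union of commutative
  subalgebras \<open>C\<^sub>1 \<subseteq> A(O\<^sub>1)\<close>, \<open>C\<^sub>2 \<subseteq> A(O\<^sub>2)\<close> is a commuting self-adjoint set; its bicommutant
  cut down to \<open>A(O\<^sub>1 \<or> O\<^sub>2)\<close> is a commutative C*-subalgebra containing it, so there is a smallest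
  one, and \<open>(C\<^sub>1, C\<^sub>2) \<mapsto>\<close> (smallest commutative subalgebra containing \<open>C\<^sub>1 \<union> C\<^sub>2\<close>) is left
  adjoint to the restriction map. Conversely, given a left adjoint \<open>l\<close>, self-adjoint
  \<open>x \<in> A(O\<^sub>1)\<close> and \<open>y \<in> A(O\<^sub>2)\<close> generate commutative subalgebras \<open>C\<^sub>x\<close>, \<open>C\<^sub>y\<close>, and the unit of
  the adjunction puts \<open>x\<close> and \<open>y\<close> into the single commutative algebra \<open>l(C\<^sub>x, C\<^sub>y)\<close>; writing
  arbitrary elements as \<open>h + i k\<close> with \<open>h, k\<close> self-adjoint gives locality.\<close>

definition commutant :: "'a::cstar_algebra set \<Rightarrow> 'a set" where
  "commutant S = {x. \<forall>s\<in>S. x * s = s * x}"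

lemma closed_commutant: "closed (commutant S)"
proof -
  have "commutant S = (\<Inter>s\<in>S. {x. x * s = s * x})" unfolding commutant_def by auto
  moreover have "closed {x::'a. x * s = s * x}" for s
    by (rule closed_Collect_eq) (auto intro: continuous_intros)
  ultimately show ?thesis by auto
qed

lemma cstar_subalg_commutant:
  assumes "\<forall>s\<in>S. cstar s \<in> S"
  shows "cstar_subalg (commutant S)"
  unfolding cstar_subalg_def
proof (intro conjI)
  show "\<forall>x\<in>commutant S. \<forall>y\<in>commutant S. x + y \<in> commutant S \<and> x * y \<in> commutant S"
    unfolding commutant_def by (auto simp: distrib_left distrib_right) (metis mult.assoc)
  show "\<forall>x\<in>commutant S. cstar x \<in> commutant S"
    unfolding commutant_def
  proof (intro ballI CollectI)
    fix x s assume x: "x \<in> {x. \<forall>s\<in>S. x * s = s * x}" and "s \<in> S"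
    then have "cstar (x * cstar s) = cstar (cstar s * x)" using assms by auto
    then show "cstar x * s = s * cstar x" by (simp add: cstar_mult cstar_cstar)
  qed
  show "closed (commutant S)" by (rule closed_commutant)
qed (auto simp: commutant_def mult_scaleC_left mult_scaleC_right)

lemma subset_bicommutant: "S \<subseteq> commutant (commutant S)"
  unfolding commutant_def by auto

lemma bicommutant_commutative:
  assumes "\<forall>x\<in>S. \<forall>y\<in>S. x * y = y * x"
    and "x \<in> commutant (commutant S)" "y \<in> commutant (commutant S)"
  shows "x * y = y * x"
proof -
  have "S \<subseteq> commutant S" using assms(1) unfolding commutant_def by auto
  then have "commutant (commutant S) \<subseteq> commutant S" unfolding commutant_def by auto
  then show ?thesis using assms(2,3) unfolding commutant_def by blast
qed

lemma cstar_subalg_Inter: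
  "F \<noteq> {} \<Longrightarrow> \<forall>D\<in>F. cstar_subalg D \<Longrightarrow> cstar_subalg (\<Inter>F)"
  unfolding cstar_subalg_def by (auto intro!: closed_Inter)

lemma Inter_comm_subalgs:
  "F \<noteq> {} \<Longrightarrow> F \<subseteq> comm_subalgs B \<Longrightarrow> \<Inter>F \<in> comm_subalgs B"
  using cstar_subalg_Inter[of F] unfolding comm_subalgs_def by blast

lemma cstar_subalg_Int: "cstar_subalg C \<Longrightarrow> cstar_subalg D \<Longrightarrow> cstar_subalg (C \<inter> D)"
  unfolding cstar_subalg_def by auto

lemma comm_subalgs_bicommutant_Int:
  assumes "cstar_subalg B" "S \<subseteq> B"
    and "\<forall>s\<in>S. cstar s \<in> S" "\<forall>x\<in>S. \<forall>y\<in>S. x * y = y * x"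
  shows "commutant (commutant S) \<inter> B \<in> comm_subalgs B"
proof -
  have "cstar_subalg (commutant (commutant S))"
    using cstar_subalg_commutant[OF assms(3)]
    by (intro cstar_subalg_commutant) (simp add: cstar_subalg_def)
  then have "cstar_subalg (commutant (commutant S) \<inter> B)"
    using assms(1) by (rule cstar_subalg_Int)
  then show ?thesis
    using bicommutant_commutative[OF assms(4)] unfolding comm_subalgs_def by blast
qed

definition comm_hull :: "'a::cstar_algebra set \<Rightarrow> 'a set \<Rightarrow> 'a set" where
  "comm_hull B S = \<Inter>{D \<in> comm_subalgs B. S \<subseteq> D}"

lemma comm_hull_least: "D \<in> comm_subalgs B \<Longrightarrow> S \<subseteq> D \<Longrightarrow> comm_hull B S \<subseteq> D"
  unfolding comm_hull_def by blast

lemma comm_hull_mono: "S \<subseteq> T \<Longrightarrow> comm_hull B S \<subseteq> comm_hull B T"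
  unfolding comm_hull_def by blast

lemma subset_comm_hull: "S \<subseteq> comm_hull B S"
  unfolding comm_hull_def by blast

lemma comm_hull_in_comm_subalgs:
  assumes "cstar_subalg B" "S \<subseteq> B"
    and "\<forall>s\<in>S. cstar s \<in> S" "\<forall>x\<in>S. \<forall>y\<in>S. x * y = y * x"
  shows "comm_hull B S \<in> comm_subalgs B"
  unfolding comm_hull_def
proof (rule Inter_comm_subalgs)
  show "{D \<in> comm_subalgs B. S \<subseteq> D} \<noteq> {}"
    using comm_subalgs_bicommutant_Int[OF assms] assms(2) subset_bicommutant by blast
qed blast

lemma comm_hull_selfadjoint_in_comm_subalgs:
  "cstar_subalg B \<Longrightarrow> h \<in> B \<Longrightarrow> cstar h = h \<Longrightarrow> comm_hull B {h} \<in> comm_subalgs B"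
  by (rule comm_hull_in_comm_subalgs) auto

lemma has_left_adjoint_restrict_comm_subalgs:
  assumes B: "cstar_subalg B" and B1: "B1 \<subseteq> B" and B2: "B2 \<subseteq> B"
    and commute: "\<forall>a\<in>B1. \<forall>b\<in>B2. a * b = b * a"
  shows "has_left_adjoint (comm_subalgs B1 \<times> comm_subalgs B2) prod_le
    (comm_subalgs B) (\<subseteq>) (\<lambda>C. (C \<inter> B1, C \<inter> B2))"
  unfolding has_left_adjoint_def
proof (intro exI[of _ "\<lambda>p. comm_hull B (fst p \<union> snd p)"] conjI ballI impI)
  fix p assume "p \<in> comm_subalgs B1 \<times> comm_subalgs B2"
  then have C1: "fst p \<in> comm_subalgs B1" and C2: "snd p \<in> comm_subalgs B2" by auto
  show "comm_hull B (fst p \<union> snd p) \<in> comm_subalgs B"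
  proof (rule comm_hull_in_comm_subalgs[OF B])
    show "fst p \<union> snd p \<subseteq> B" using C1 C2 B1 B2 unfolding comm_subalgs_def by auto
    show "\<forall>s\<in>fst p \<union> snd p. cstar s \<in> fst p \<union> snd p"
      using C1 C2 unfolding comm_subalgs_def cstar_subalg_def by auto
    show "\<forall>x\<in>fst p \<union> snd p. \<forall>y\<in>fst p \<union> snd p. x * y = y * x"
      using C1 C2 commute unfolding comm_subalgs_def by auto (metis subsetD)+
  qed
next
  fix p p' :: "'a set \<times> 'a set" assume "prod_le p p'"
  then show "comm_hull B (fst p \<union> snd p) \<subseteq> comm_hull B (fst p' \<union> snd p')"
    unfolding prod_le_def by (intro comm_hull_mono) blast
next
  fix p C assume p: "p \<in> comm_subalgs B1 \<times> comm_subalgs B2" and C: "C \<in> comm_subalgs B"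
  have "fst p \<subseteq> B1" "snd p \<subseteq> B2" using p unfolding comm_subalgs_def by auto
  then show "comm_hull B (fst p \<union> snd p) \<subseteq> C \<longleftrightarrow> prod_le p (C \<inter> B1, C \<inter> B2)"
    using subset_comm_hull[of "fst p \<union> snd p" B] comm_hull_least[OF C, of "fst p \<union> snd p"]
    unfolding prod_le_def by auto
qed

lemma scaleC_zero_left: "scaleC 0 (x::'a::cstar_algebra) = 0"
  using scaleC_scaleR[of 0 x] by simp

lemma selfadjoint_decomposition:
  assumes "cstar_subalg B" "a \<in> B"
  obtains h k where "h \<in> B" "k \<in> B" "cstar h = h" "cstar k = k" "a = h + scaleC \<i> k"
proof
  define h where "h = scaleC (1/2) a + scaleC (1/2) (cstar a)"
  define k where "k = scaleC (-\<i>/2) a + scaleC (\<i>/2) (cstar a)"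
  show "h \<in> B" "k \<in> B" using assms unfolding h_def k_def cstar_subalg_def by auto
  show "cstar h = h" "cstar k = k"
    unfolding h_def k_def by (simp_all add: cstar_add cstar_scaleC cstar_cstar add.commute)
  have "h + scaleC \<i> k
      = (scaleC (1/2) a + scaleC (1/2) a) + (scaleC (1/2) (cstar a) + scaleC (-1/2) (cstar a))"
    unfolding h_def k_def by (simp add: scaleC_add_right scaleC_scaleC algebra_simps)
  also have "\<dots> = a"
    by (simp only: scaleC_add_left[symmetric]) (simp add: scaleC_one scaleC_zero_left)
  finally show "a = h + scaleC \<i> k" by simp
qed

lemma commute_if_selfadjoints_commute:
  assumes B1: "cstar_subalg B1" and B2: "cstar_subalg B2" and a: "a \<in> B1" and b: "b \<in> B2"
    and selfadjoint_commute:
      "\<And>x y. x \<in> B1 \<Longrightarrow> y \<in> B2 \<Longrightarrow> cstar x = x \<Longrightarrow> cstar y = y \<Longrightarrow> x * y = y * x"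
  shows "a * b = (b * a :: 'a::cstar_algebra)"
proof -
  obtain h1 k1 where "h1 \<in> B1" "k1 \<in> B1" "cstar h1 = h1" "cstar k1 = k1"
    and a_eq: "a = h1 + scaleC \<i> k1"
    using selfadjoint_decomposition[OF B1 a] .
  moreover obtain h2 k2 where "h2 \<in> B2" "k2 \<in> B2" "cstar h2 = h2" "cstar k2 = k2"
    and b_eq: "b = h2 + scaleC \<i> k2"
    using selfadjoint_decomposition[OF B2 b] .
  ultimately have "h1 * h2 = h2 * h1" "h1 * k2 = k2 * h1" "k1 * h2 = h2 * k1" "k1 * k2 = k2 * k1"
    using selfadjoint_commute by auto
  then show ?thesis unfolding a_eq b_eq
    by (simp add: distrib_left distrib_right mult_scaleC_left mult_scaleC_right add_ac
        scaleC_add_right)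
qed

lemma commute_if_has_left_adjoint:
  assumes B1: "cstar_subalg B1" and B2: "cstar_subalg B2"
    and adj: "has_left_adjoint (comm_subalgs B1 \<times> comm_subalgs B2) prod_le
      (comm_subalgs B) (\<subseteq>) (\<lambda>C. (C \<inter> B1, C \<inter> B2))"
    and "a \<in> B1" "b \<in> B2"
  shows "a * b = b * a"
proof -
  obtain l where l_in: "\<forall>p\<in>comm_subalgs B1 \<times> comm_subalgs B2. l p \<in> comm_subalgs B"
    and l_adj: "\<forall>p\<in>comm_subalgs B1 \<times> comm_subalgs B2. \<forall>C\<in>comm_subalgs B.
      l p \<subseteq> C \<longleftrightarrow> prod_le p (C \<inter> B1, C \<inter> B2)"
    using adj unfolding has_left_adjoint_def by blast
  show ?thesis
  proof (rule commute_if_selfadjoints_commute[OF B1 B2 \<open>a \<in> B1\<close> \<open>b \<in> B2\<close>])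
    fix x y assume "x \<in> B1" "y \<in> B2" "cstar x = x" "cstar y = y"
    define p where "p = (comm_hull B1 {x}, comm_hull B2 {y})"
    have p: "p \<in> comm_subalgs B1 \<times> comm_subalgs B2"
      unfolding p_def
      using comm_hull_selfadjoint_in_comm_subalgs[OF B1 \<open>x \<in> B1\<close> \<open>cstar x = x\<close>]
        comm_hull_selfadjoint_in_comm_subalgs[OF B2 \<open>y \<in> B2\<close> \<open>cstar y = y\<close>]
      by (rule SigmaI)
    then have lp: "l p \<in> comm_subalgs B" using l_in by blast
    \<comment> \<open>the unit of the adjunction\<close>
    have "prod_le p (l p \<inter> B1, l p \<inter> B2)" using l_adj p lp by blast
    then have "comm_hull B1 {x} \<subseteq> l p" "comm_hull B2 {y} \<subseteq> l p"
      unfolding prod_le_def p_def by auto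
    then have "x \<in> l p" "y \<in> l p" using subset_comm_hull by blast+
    then show "x * y = y * x" using lp unfolding comm_subalgs_def by blast
  qed
qed

theorem mainTheorem12:
  fixes causal :: "'p::topological_space \<Rightarrow> 'p \<Rightarrow> bool"
    and A :: "'p set \<Rightarrow> 'a::cstar_algebra set"
  assumes "is_net causal A"
  shows "is_local_net causal A \<longleftrightarrow>
    (\<forall>U1\<in>V_opens causal. \<forall>U2\<in>V_opens causal. \<forall>J.
       spacelike_sep causal U1 U2 \<and> is_join (V_opens causal) U1 U2 J \<longrightarrow>
       has_left_adjoint (comm_subalgs (A U1) \<times> comm_subalgs (A U2)) prod_le
         (comm_subalgs (A J)) (\<subseteq>) (\<lambda>C. (C \<inter> A U1, C \<inter> A U2)))"
proof -
  have "(\<forall>a\<in>A U1. \<forall>b\<in>A U2. a * b = b * a) \<longleftrightarrow>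
      has_left_adjoint (comm_subalgs (A U1) \<times> comm_subalgs (A U2)) prod_le
        (comm_subalgs (A J)) (\<subseteq>) (\<lambda>C. (C \<inter> A U1, C \<inter> A U2))"
    if "U1 \<in> V_opens causal" "U2 \<in> V_opens causal" "is_join (V_opens causal) U1 U2 J"
    for U1 U2 J
  proof -
    have "J \<in> V_opens causal" "U1 \<subseteq> J" "U2 \<subseteq> J" using that(3) unfolding is_join_def by auto
    then have B1: "cstar_subalg (A U1)" and B2: "cstar_subalg (A U2)" and B: "cstar_subalg (A J)"
      and "A U1 \<subseteq> A J" "A U2 \<subseteq> A J"
      using assms that(1,2) unfolding is_net_def by auto
    show ?thesis
    proof
      assume "\<forall>a\<in>A U1. \<forall>b\<in>A U2. a * b = b * a"
      then show "has_left_adjoint (comm_subalgs (A U1) \<times> comm_subalgs (A U2)) prod_le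
        (comm_subalgs (A J)) (\<subseteq>) (\<lambda>C. (C \<inter> A U1, C \<inter> A U2))"
        using has_left_adjoint_restrict_comm_subalgs[OF B \<open>A U1 \<subseteq> A J\<close> \<open>A U2 \<subseteq> A J\<close>]
        by blast
    qed (use commute_if_has_left_adjoint[OF B1 B2] in blast)
  qed
  then show ?thesis unfolding is_local_net_def by blast
qed

end
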